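(* Let $(X,\|\cdot\|)$ be a normed linear space, let $I$ be a non-trivial admissible ideal in $\mathbb{N}$, let $r\ge 0$, let $x=\{x_k\}_{k\in\mathbb{N}}$ be a sequence in $X$ and let $c\in\Lambda_x^S(I)$. Then $\|\xi-c\|\le r$ for all $\xi\in I\text{-}st\text{-}\mathrm{LIM}_x^r$.
   Context: An ideal $I$ in $\mathbb{N}$ is a family of subsets of $\mathbb{N}$ containing $\emptyset$, closed under finite unions and under taking subsets; it is non-trivial if $\mathbb{N}\notin I$ and admissible if $\{n\}\in I$ for every $n$. For a real sequence $(a_n)$, $I\text{-}\lim a_n=L$ means $\{n:|a_n-L|\ge\varepsilon\}\in I$ for all $\varepsilon>0$. For $A\subset\mathbb{N}$, $d_I(A)=I\text{-}\lim_{n\to\infty}\frac1n|\{k\le n:k\in A\}|$ when this $I$-limit exists; "$d_I(A)\ne0$" means it is not the case that $d_I(A)$ exists and equals $0$. A point $\lambda\in X$ is an $I$-statistical cluster point of $x$ if for every $\varepsilon>0$, $d_I(\{k:\|x_k-\lambda\|<\varepsilon\})\ne0$; $\Lambda_x^S(I)$ is the set of these points. For $r\ge0$, $x$ is $r$-$I$-statistically convergent to $\xi$ if for every $\varepsilon>0$ and $\delta>0$, $\{n\in\mathbb{N}:\frac1n|\{k\le n:\|x_k-\xi\|\ge r+\varepsilon\}|\ge\delta\}\in I$; $I\text{-}st\text{-}\mathrm{LIM}_x^r$ is the set of all such $\xi$. *)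

theory Defs
  imports "HOL-Analysis.Analysis"
begin

text \<open>Ideals on the natural numbers (index set nat; term 0 is harmless since
admissible ideals contain all finite sets).\<close>

definition is_ideal :: "nat set set \<Rightarrow> bool" where
  "is_ideal I \<longleftrightarrow> {} \<in> I \<and> (\<forall>A\<in>I. \<forall>B\<in>I. A \<union> B \<in> I) \<and> (\<forall>A\<in>I. \<forall>B. B \<subseteq> A \<longrightarrow> B \<in> I)"

definition nontrivial_ideal :: "nat set set \<Rightarrow> bool" where
  "nontrivial_ideal I \<longleftrightarrow> UNIV \<notin> I"

definition admissible_ideal :: "nat set set \<Rightarrow> bool" where
  "admissible_ideal I \<longleftrightarrow> (\<forall>n. {n} \<in> I)"

definition I_lim :: "nat set set \<Rightarrow> (nat \<Rightarrow> real) \<Rightarrow> real \<Rightarrow> bool" where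
  "I_lim I a L \<longleftrightarrow> (\<forall>\<epsilon>>0. {n. \<bar>a n - L\<bar> \<ge> \<epsilon>} \<in> I)"

definition dens :: "nat set \<Rightarrow> nat \<Rightarrow> real" where
  "dens A n = real (card {k \<in> {1..n}. k \<in> A}) / real n"

text \<open>"d_I(A) \<noteq> 0": it is not the case that d_I(A) exists and equals 0.\<close>
definition dI_nonzero :: "nat set set \<Rightarrow> nat set \<Rightarrow> bool" where
  "dI_nonzero I A \<longleftrightarrow> \<not> I_lim I (dens A) 0"

definition I_stat_cluster :: "nat set set \<Rightarrow> (nat \<Rightarrow> 'a::real_normed_vector) \<Rightarrow> 'a set" where
  "I_stat_cluster I x = {l. \<forall>\<epsilon>>0. dI_nonzero I {k. norm (x k - l) < \<epsilon>}}"

definition r_I_stat_LIM :: "nat set set \<Rightarrow> real \<Rightarrow> (nat \<Rightarrow> 'a::real_normed_vector) \<Rightarrow> 'a set" where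
  "r_I_stat_LIM I r x = {\<xi>. \<forall>\<epsilon>>0. \<forall>\<delta>>0.
     {n. dens {k. norm (x k - \<xi>) \<ge> r + \<epsilon>} n \<ge> \<delta>} \<in> I}"

end

theory Submission
  imports Defs
begin

text \<open>If \<open>\<xi>\<close> were at distance more than \<open>r\<close> from \<open>c\<close>, then with \<open>\<epsilon> = (\<parallel>\<xi> - c\<parallel> - r)/2\<close>
  every index \<open>k\<close> with \<open>x\<^sub>k\<close> \<open>\<epsilon>\<close>-close to \<open>c\<close> has \<open>x\<^sub>k\<close> at distance at least \<open>r + \<epsilon>\<close> from \<open>\<xi>\<close>.
  The latter indices have \<open>I\<close>-statistical density zero because \<open>\<xi>\<close> is an \<open>r\<close>-limit, hence
  so do the former by monotonicity of the density, contradicting that \<open>c\<close> is an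
  \<open>I\<close>-statistical cluster point.\<close>

lemma dens_mono: "A \<subseteq> B \<Longrightarrow> dens A n \<le> dens B n"
  unfolding dens_def by (intro divide_right_mono) (auto intro!: card_mono)

lemma dens_nonneg: "dens A n \<ge> 0"
  unfolding dens_def by simp

lemma I_lim_dens_zero_subset:
  assumes "is_ideal I" and "A \<subseteq> B"
    and B: "\<And>\<delta>. \<delta> > 0 \<Longrightarrow> {n. dens B n \<ge> \<delta>} \<in> I"
  shows "I_lim I (dens A) 0"
  unfolding I_lim_def
proof (intro allI impI)
  fix \<delta> :: real assume "\<delta> > 0"
  have "{n. \<bar>dens A n - 0\<bar> \<ge> \<delta>} \<subseteq> {n. dens B n \<ge> \<delta>}"
    using dens_mono[OF \<open>A \<subseteq> B\<close>] dens_nonneg by (auto intro: order_trans)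
  with B[OF \<open>\<delta> > 0\<close>] \<open>is_ideal I\<close> show "{n. \<bar>dens A n - 0\<bar> \<ge> \<delta>} \<in> I"
    unfolding is_ideal_def by blast
qed

lemma norm_diff_ge_if_close:
  fixes y c \<xi> :: "'a::real_normed_vector"
  assumes "norm (y - c) < \<epsilon>" and "r + 2 * \<epsilon> \<le> norm (\<xi> - c)"
  shows "r + \<epsilon> \<le> norm (y - \<xi>)"
proof -
  have "norm (\<xi> - c) \<le> norm (y - \<xi>) + norm (y - c)"
    using norm_triangle_ineq4[of "y - c" "y - \<xi>"] by (simp add: algebra_simps)
  with assms show ?thesis by linarith
qed

theorem theorem3p6:
  fixes I :: "nat set set" and r :: real and x :: "nat \<Rightarrow> 'a::real_normed_vector" and c :: 'a
  assumes "is_ideal I" and "nontrivial_ideal I" and "admissible_ideal I"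
    and "r \<ge> 0"
    and "c \<in> I_stat_cluster I x"
  shows "\<forall>\<xi>\<in>r_I_stat_LIM I r x. norm (\<xi> - c) \<le> r"
proof (intro ballI, rule ccontr)
  fix \<xi> assume \<xi>: "\<xi> \<in> r_I_stat_LIM I r x" and "\<not> norm (\<xi> - c) \<le> r"
  define \<epsilon> where "\<epsilon> = (norm (\<xi> - c) - r) / 2"
  have "\<epsilon> > 0" using \<open>\<not> norm (\<xi> - c) \<le> r\<close> by (simp add: \<epsilon>_def)
  have "r + 2 * \<epsilon> \<le> norm (\<xi> - c)" by (simp add: \<epsilon>_def field_simps)
  then have near_c_far_\<xi>: "{k. norm (x k - c) < \<epsilon>} \<subseteq> {k. norm (x k - \<xi>) \<ge> r + \<epsilon>}"
    by (auto intro: norm_diff_ge_if_close)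
  have "I_lim I (dens {k. norm (x k - c) < \<epsilon>}) 0"
    using I_lim_dens_zero_subset[OF \<open>is_ideal I\<close> near_c_far_\<xi>] \<xi> \<open>\<epsilon> > 0\<close>
    unfolding r_I_stat_LIM_def by blast
  moreover have "dI_nonzero I {k. norm (x k - c) < \<epsilon>}"
    using assms(5) \<open>\<epsilon> > 0\<close> unfolding I_stat_cluster_def by blast
  ultimately show False unfolding dI_nonzero_def by blast
qed

end
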